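(* Let $f:\mathbb{R}^{m\times n}\to\mathbb{R}$ ($m\ge n$) be differentiable with $\|\nabla f(X)-\nabla f(Y)\|_*\le L\|X-Y\|_2$ for all $X,Y$, where $L>0$. Let $\eta>0$ with $\eta L\le1$, let $X_t, B_t\in\mathbb{R}^{m\times n}$ be arbitrary, let $\Delta_t=\arg\min_\Delta\{\operatorname{tr}(B_t^\top\Delta)+\frac{1}{2\eta}\|\Delta\|_2^2\}$ (i.e. $\Delta_t=-\eta\|B_t\|_*UV^\top$ with $B_t=U\Sigma V^\top$ the compact SVD, $\Delta_t=0$ if $B_t=0$), and $X_{t+1}=X_t+\Delta_t$. Then $$\Big(\frac{\eta}{2}-\frac{\eta^2L}{2}\Big)\|\nabla f(X_t)\|_*^2\le 2\big(f(X_t)-f(X_{t+1})\big)+(2\eta-\eta^2L)\|\nabla f(X_t)-B_t\|_*^2.$$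
   Context: $\|\cdot\|_2$ is the spectral norm (largest singular value) and $\|\cdot\|_*$ the nuclear norm (sum of singular values); $\operatorname{tr}(X^\top Y)$ is the Frobenius inner product. *)

theory Defs
  imports "HOL-Analysis.Analysis"
begin

text \<open>Real m x n matrices are rendered as real^'n^'m (rows indexed by 'm, columns by 'n).\<close>

definition frob_inner :: "real^'n^'m \<Rightarrow> real^'n^'m \<Rightarrow> real" where
  "frob_inner X Y = trace (transpose X ** Y)"

definition is_singular_values :: "real^'n^'m \<Rightarrow> real^'n \<Rightarrow> bool" where
  "is_singular_values A \<sigma> \<longleftrightarrow> (\<forall>j. 0 \<le> \<sigma> $ j) \<and>
     (\<exists>V::real^'n^'n. orthogonal_matrix V \<and>
        transpose A ** A = V ** (\<chi> i j. if i = j then (\<sigma> $ i)\<^sup>2 else 0) ** transpose V)"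

definition spectral_norm :: "real^'n^'m \<Rightarrow> real" where
  "spectral_norm A = (SOME s. \<exists>\<sigma>. is_singular_values A \<sigma> \<and> s = Max (range (\<lambda>j. \<sigma> $ j)))"

definition nuclear_norm :: "real^'n^'m \<Rightarrow> real" where
  "nuclear_norm A = (SOME s. \<exists>\<sigma>. is_singular_values A \<sigma> \<and> s = (\<Sum>j\<in>UNIV. \<sigma> $ j))"

definition grad :: "(real^'n^'m \<Rightarrow> real) \<Rightarrow> real^'n^'m \<Rightarrow> real^'n^'m" where
  "grad f X = (SOME G. (f has_derivative (\<lambda>H. frob_inner G H)) (at X))"

definition outer :: "real^'m \<Rightarrow> real^'n \<Rightarrow> real^'n^'m" where
  "outer u v = (\<chi> i j. u $ i * v $ j)"

end

theory Submission
  imports Defs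
begin

text \<open>The nuclear norm is dual to the operator norm: \<open>\<langle>A, W\<rangle> \<le> \<parallel>A\<parallel>\<^sub>* \<parallel>W\<parallel>\<^sub>o\<^sub>p\<close>, with equality
  for some \<open>W\<close> of operator norm at most 1 (both read off a singular value decomposition, which in
  turn comes from the spectral theorem for \<open>A\<^sup>T A\<close>). Since the spectral norm is at most the
  operator norm, the Lipschitz hypothesis yields the descent lemma
  \<open>f (X + D) \<le> f X + \<langle>\<nabla>f X, D\<rangle> + L/2 \<parallel>D\<parallel>\<^sub>o\<^sub>p\<^sup>2\<close>. For the step,
  \<open>\<langle>B, \<Delta>\<rangle> = -\<eta> b\<^sup>2\<close> and \<open>\<parallel>\<Delta>\<parallel>\<^sub>o\<^sub>p \<le> \<eta> b\<close> with \<open>b = \<parallel>B\<parallel>\<^sub>*\<close>; writing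
  \<open>\<nabla>f X = B + (\<nabla>f X - B)\<close> and \<open>e = \<parallel>\<nabla>f X - B\<parallel>\<^sub>*\<close> gives
  \<open>f X - f X' \<ge> \<eta> b\<^sup>2 - \<eta> b e - L \<eta>\<^sup>2 b\<^sup>2 / 2\<close>. As \<open>\<parallel>\<nabla>f X\<parallel>\<^sub>* \<le> b + e\<close>, the claim then
  reduces to \<open>\<eta> (3 - \<eta> L) (b - e)\<^sup>2 / 2 \<ge> 0\<close>.\<close>

section \<open>Spectral theorem for symmetric matrices\<close>

lemma symmetric_matrix_inner_commute:
  fixes M :: "real^'n^'n"
  assumes "transpose M = M"
  shows "(M *v x) \<bullet> y = x \<bullet> (M *v y)"
  by (metis assms dot_lmul_matrix vector_transpose_matrix)

lemma quadratic_nonpos_imp_linear_coeff_zero: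
  fixes c d :: real
  assumes "\<And>s::real. 2 * s * c + s\<^sup>2 * d \<le> 0"
  shows "c = 0"
proof -
  define a where "a = \<bar>d\<bar> + 1"
  have a: "a > 0" "2 * a + d > 0" unfolding a_def by auto
  have "(2 * (c / a) * c + (c / a)\<^sup>2 * d) * a\<^sup>2 \<le> 0"
    using assms[of "c / a"] by (simp add: mult_nonpos_nonneg)
  also have "(2 * (c / a) * c + (c / a)\<^sup>2 * d) * a\<^sup>2 = c\<^sup>2 * (2 * a + d)"
    using a by (simp add: field_simps power2_eq_square)
  finally have "c\<^sup>2 \<le> 0" using a by (simp add: mult_le_0_iff)
  then show ?thesis by simp
qed

text \<open>Perturbing the maximiser \<open>v\<close> by \<open>s w\<close> with \<open>w \<bottom> v\<close> shows \<open>w \<bottom> M v\<close>.\<close>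
lemma rayleigh_maximizer_eigenvector:
  fixes M :: "real^'n^'n"
  assumes sym: "transpose M = M" and S: "subspace S" and inv: "\<forall>x\<in>S. M *v x \<in> S"
    and vS: "v \<in> S" and vv: "v \<bullet> v = 1"
    and max: "\<And>y. y \<in> S \<Longrightarrow> y \<bullet> (M *v y) \<le> (v \<bullet> (M *v v)) * (y \<bullet> y)"
  shows "M *v v = (v \<bullet> (M *v v)) *\<^sub>R v"
proof -
  define l where "l = v \<bullet> (M *v v)"
  have orth: "w \<bullet> (M *v v) = 0" if w: "w \<in> S" "w \<bullet> v = 0" for w
  proof (rule quadratic_nonpos_imp_linear_coeff_zero)
    fix s :: real
    have "v + s *\<^sub>R w \<in> S" using vS w S by (simp add: subspace_add subspace_scale)
    from max[OF this]
    have "(v + s *\<^sub>R w) \<bullet> (M *v (v + s *\<^sub>R w)) \<le> l * ((v + s *\<^sub>R w) \<bullet> (v + s *\<^sub>R w))"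
      by (simp add: l_def)
    moreover have "(v + s *\<^sub>R w) \<bullet> (M *v (v + s *\<^sub>R w))
        = l + 2 * s * (w \<bullet> (M *v v)) + s\<^sup>2 * (w \<bullet> (M *v w))"
      using symmetric_matrix_inner_commute[OF sym, of v w]
      by (simp add: l_def matrix_vector_right_distrib matrix_vector_mult_scaleR inner_add_left
          inner_add_right power2_eq_square algebra_simps inner_commute)
    moreover have "(v + s *\<^sub>R w) \<bullet> (v + s *\<^sub>R w) = 1 + s\<^sup>2 * (w \<bullet> w)"
      using vv w by (simp add: inner_add_left inner_add_right power2_eq_square inner_commute)
    ultimately have "l + 2 * s * (w \<bullet> (M *v v)) + s\<^sup>2 * (w \<bullet> (M *v w)) \<le> l * (1 + s\<^sup>2 * (w \<bullet> w))"
      by (simp only:)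
    then show "2 * s * (w \<bullet> (M *v v)) + s\<^sup>2 * (w \<bullet> (M *v w) - l * (w \<bullet> w)) \<le> 0"
      by (simp add: algebra_simps)
  qed
  define u where "u = M *v v - l *\<^sub>R v"
  have uS: "u \<in> S" unfolding u_def using vS inv S by (simp add: subspace_diff subspace_scale)
  have uv: "u \<bullet> v = 0" unfolding u_def using vv symmetric_matrix_inner_commute[OF sym, of v v]
    by (simp add: l_def inner_diff_left inner_diff_right inner_commute)
  have "u \<bullet> u = u \<bullet> (M *v v) - l * (u \<bullet> v)" unfolding u_def by (simp add: inner_diff_right)
  also have "\<dots> = 0" using orth[OF uS uv] uv by simp
  finally show ?thesis unfolding u_def l_def by simp
qed

lemma symmetric_matrix_eigenvector_in_subspace:
  fixes M :: "real^'n^'n"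
  assumes sym: "transpose M = M" and S: "subspace S"
    and inv: "\<forall>x\<in>S. M *v x \<in> S" and ne: "S \<noteq> {0}"
  obtains v where "v \<in> S" "norm v = 1" "M *v v = (v \<bullet> (M *v v)) *\<^sub>R v"
proof -
  define K where "K = S \<inter> sphere 0 1"
  have normalize: "y /\<^sub>R norm y \<in> K" if "y \<in> S" "y \<noteq> 0" for y
    using that S unfolding K_def by (simp add: subspace_scale)
  have cK: "compact K" unfolding K_def
    by (intro closed_Int_compact closed_subspace S compact_sphere)
  obtain x where "x \<in> S" "x \<noteq> 0" using ne S subspace_0 by blast
  then have neK: "K \<noteq> {}" using normalize by blast
  have "continuous_on K (\<lambda>y. y \<bullet> (M *v y))"
    by (intro continuous_intros linear_continuous_on matrix_vector_mul_bounded_linear)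
  then obtain v where v: "v \<in> K" and vmax: "\<And>y. y \<in> K \<Longrightarrow> y \<bullet> (M *v y) \<le> v \<bullet> (M *v v)"
    using continuous_attains_sup[OF cK neK] by blast
  have vS: "v \<in> S" and nv: "norm v = 1" using v unfolding K_def by auto
  have "y \<bullet> (M *v y) \<le> (v \<bullet> (M *v v)) * (y \<bullet> y)" if y: "y \<in> S" for y
  proof (cases "y = 0")
    case False
    have "(y /\<^sub>R norm y) \<bullet> (M *v (y /\<^sub>R norm y)) = (y \<bullet> (M *v y)) / (y \<bullet> y)"
      using False by (simp add: matrix_vector_mult_scaleR power2_norm_eq_inner[symmetric]
          power2_eq_square field_simps)
    moreover have "y \<bullet> y > 0" using False by simp
    ultimately show ?thesis using vmax[OF normalize[OF y False]] by (simp add: divide_le_eq mult.commute)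
  qed simp
  then have "M *v v = (v \<bullet> (M *v v)) *\<^sub>R v"
    using rayleigh_maximizer_eigenvector[OF sym S inv vS] nv by (simp add: norm_eq_1)
  then show ?thesis using that vS nv by blast
qed

lemma symmetric_matrix_orthonormal_eigenbasis_of_subspace:
  fixes M :: "real^'n^'n"
  assumes sym: "transpose M = M"
  shows "subspace S \<Longrightarrow> (\<forall>x\<in>S. M *v x \<in> S) \<Longrightarrow>
    \<exists>B. B \<subseteq> S \<and> S \<subseteq> span B \<and> pairwise orthogonal B \<and>
        (\<forall>b\<in>B. norm b = 1 \<and> (\<exists>l. M *v b = l *\<^sub>R b))"
proof (induction "dim S" arbitrary: S rule: less_induct)
  case less
  show ?case
  proof (cases "S = {0}")
    case True
    then show ?thesis by (intro exI[of _ "{}"]) auto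
  next
    case False
    obtain v where vS: "v \<in> S" and nv: "norm v = 1" and ev: "M *v v = (v \<bullet> (M *v v)) *\<^sub>R v"
      using symmetric_matrix_eigenvector_in_subspace[OF sym less.prems False] by blast
    have vv: "v \<bullet> v = 1" using nv by (simp add: norm_eq_1)
    define S' where "S' = {x\<in>S. x \<bullet> v = 0}"
    have sub': "subspace S'" using less.prems(1) unfolding S'_def subspace_def
      by (auto simp: inner_add_left)
    have inv': "\<forall>x\<in>S'. M *v x \<in> S'"
    proof
      fix x assume x: "x \<in> S'"
      have "(M *v x) \<bullet> v = x \<bullet> (M *v v)" by (rule symmetric_matrix_inner_commute[OF sym])
      also have "\<dots> = (v \<bullet> (M *v v)) * (x \<bullet> v)" using ev by (metis inner_scaleR_right)
      also have "\<dots> = 0" using x by (simp add: S'_def)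
      finally show "M *v x \<in> S'" using x less.prems(2) by (simp add: S'_def)
    qed
    have "v \<notin> S'" by (simp add: S'_def vv)
    then have "S' \<subset> S" using vS unfolding S'_def by blast
    then have "dim S' < dim S"
      using dim_psubset[of S' S] sub' less.prems(1) by (metis span_eq_iff)
    from less.hyps[OF this sub' inv'] obtain B' where
      B': "B' \<subseteq> S'" "S' \<subseteq> span B'" "pairwise orthogonal B'"
        "\<forall>b\<in>B'. norm b = 1 \<and> (\<exists>l. M *v b = l *\<^sub>R b)" by blast
    show ?thesis
    proof (intro exI[of _ "insert v B'"] conjI)
      show "insert v B' \<subseteq> S" using vS B'(1) unfolding S'_def by auto
      show "S \<subseteq> span (insert v B')"
      proof
        fix x assume x: "x \<in> S"
        have "x - (x \<bullet> v) *\<^sub>R v \<in> S'" unfolding S'_def using x vS less.prems(1) vv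
          by (simp add: subspace_diff subspace_scale inner_diff_left)
        then have "x - (x \<bullet> v) *\<^sub>R v \<in> span (insert v B')"
          using B'(2) span_mono[of B' "insert v B'"] by auto
        moreover have "(x \<bullet> v) *\<^sub>R v \<in> span (insert v B')"
          by (simp add: span_base span_scale)
        ultimately have "(x - (x \<bullet> v) *\<^sub>R v) + (x \<bullet> v) *\<^sub>R v \<in> span (insert v B')"
          by (rule span_add)
        then show "x \<in> span (insert v B')" by simp
      qed
      show "pairwise orthogonal (insert v B')"
        using B'(1,3) unfolding pairwise_insert S'_def
        by (auto simp: orthogonal_def inner_commute)
      show "\<forall>b\<in>insert v B'. norm b = 1 \<and> (\<exists>l. M *v b = l *\<^sub>R b)"
        using B'(4) nv ev by blast
    qed
  qed
qed

lemma symmetric_matrix_orthogonal_diagonalization: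
  fixes M :: "real^'n^'n"
  assumes sym: "transpose M = M"
  obtains P where "orthogonal_matrix P"
    "M = P ** (\<chi> i j. if i = j then column i P \<bullet> (M *v column i P) else 0) ** transpose P"
proof -
  obtain B where B: "UNIV \<subseteq> span B" "pairwise orthogonal B"
    "\<forall>b\<in>B. norm b = 1 \<and> (\<exists>l. M *v b = l *\<^sub>R b)"
    using symmetric_matrix_orthonormal_eigenbasis_of_subspace[OF sym, of UNIV] by auto
  have "0 \<notin> B" using B(3) by force
  then have ind: "independent B" using B(2) pairwise_orthogonal_independent by blast
  have "card B = CARD('n)"
    using basis_card_eq_dim[of B UNIV] B(1) ind by auto
  then obtain g where g: "bij_betw g (UNIV::'n set) B"
    using finite_same_card_bij[of "UNIV::'n set" B] finiteI_independent[OF ind] by auto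
  define P :: "real^'n^'n" where "P = (\<chi> i j. g j $ i)"
  have colP: "column j P = g j" for j by (simp add: P_def column_def vec_eq_iff)
  have gB: "g j \<in> B" for j using g by (auto simp: bij_betw_def)
  have ginj: "g j = g k \<Longrightarrow> j = k" for j k using g by (auto simp: bij_betw_def inj_def)
  have oP: "orthogonal_matrix P"
    unfolding orthogonal_matrix_orthonormal_columns colP
    using B(2,3) gB ginj by (metis pairwise_def)
  define lam where "lam j = g j \<bullet> (M *v g j)" for j
  have evg: "M *v g j = lam j *\<^sub>R g j" for j
  proof -
    obtain l where l: "M *v g j = l *\<^sub>R g j" using B(3) gB by blast
    have "g j \<bullet> g j = 1" using B(3) gB by (simp add: norm_eq_1)
    then show ?thesis using l unfolding lam_def by simp
  qed
  define D :: "real^'n^'n" where "D = (\<chi> i j. if i = j then lam i else 0)"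
  have "(M ** P) $ i $ j = (P ** D) $ i $ j" for i j
  proof -
    have "(M ** P) $ i $ j = (M *v g j) $ i"
      by (simp add: matrix_matrix_mult_def matrix_vector_mult_def P_def)
    also have "\<dots> = (P ** D) $ i $ j"
      by (simp add: evg matrix_matrix_mult_def D_def P_def if_distrib cong: if_cong)
    finally show ?thesis .
  qed
  then have MP: "M ** P = P ** D" by (simp add: vec_eq_iff)
  have "M = M ** (P ** transpose P)" using oP by (simp add: orthogonal_matrix_def)
  also have "\<dots> = P ** D ** transpose P" by (simp add: matrix_mul_assoc MP)
  finally have "M = P ** D ** transpose P" .
  then have "M = P ** (\<chi> i j. if i = j then column i P \<bullet> (M *v column i P) else 0) ** transpose P"
    unfolding D_def lam_def colP .
  with oP show ?thesis by (rule that)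
qed

section \<open>Singular values\<close>

lemma frob_inner_eq_inner: "frob_inner X Y = X \<bullet> Y"
  unfolding frob_inner_def trace_def matrix_matrix_mult_def transpose_def inner_vec_def
  by simp (subst sum.swap, simp add: mult.commute)

lemma transpose_matrix_mult_entry: "(transpose X ** Y) $ i $ j = column i X \<bullet> column j Y"
  by (simp add: matrix_matrix_mult_def transpose_def column_def inner_vec_def)

lemma column_matrix_mult: "column j (A ** V) = A *v column j V"
  by (simp add: vec_eq_iff matrix_matrix_mult_def matrix_vector_mult_def column_def)

lemma orthogonal_matrix_column_inner:
  assumes "orthogonal_matrix (V::real^'n^'n)"
  shows "column j V \<bullet> column k V = (if j = k then 1 else 0)"
  using assms unfolding orthogonal_matrix_orthonormal_columns
  by (auto simp: orthogonal_def norm_eq_1)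

lemma singular_values_exist: "\<exists>\<sigma>. is_singular_values (A::real^'n^'m) \<sigma>"
proof -
  define M where "M = transpose A ** A"
  have "transpose M = M" unfolding M_def by (simp add: matrix_transpose_mul)
  then obtain P where oP: "orthogonal_matrix P" and
    MP: "M = P ** (\<chi> i j. if i = j then column i P \<bullet> (M *v column i P) else 0) ** transpose P"
    by (rule symmetric_matrix_orthogonal_diagonalization)
  define \<sigma> :: "real^'n" where "\<sigma> = (\<chi> i. norm (A *v column i P))"
  have "column i P \<bullet> (M *v column i P) = (\<sigma> $ i)\<^sup>2" for i
    unfolding \<sigma>_def M_def
    by (metis dot_lmul_matrix matrix_vector_mul_assoc power2_norm_eq_inner vec_lambda_beta
        vector_transpose_matrix)
  then have "(\<chi> i j. if i = j then column i P \<bullet> (M *v column i P) else 0)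
      = (\<chi> i j. if i = j then (\<sigma> $ i)\<^sup>2 else 0)"
    by (simp add: vec_eq_iff)
  with oP MP have "is_singular_values A \<sigma>"
    unfolding is_singular_values_def M_def by (auto simp: \<sigma>_def)
  then show ?thesis by blast
qed

lemma singular_values_right_basis:
  assumes sv: "is_singular_values (A::real^'n^'m) \<sigma>"
  obtains V where "orthogonal_matrix V"
    "\<And>j k. (A *v column j V) \<bullet> (A *v column k V) = (if j = k then (\<sigma> $ j)\<^sup>2 else 0)"
    "\<And>j. norm (A *v column j V) = \<sigma> $ j"
proof -
  obtain V where oV: "orthogonal_matrix V" and
    eq: "transpose A ** A = V ** (\<chi> i j. if i = j then (\<sigma> $ i)\<^sup>2 else 0) ** transpose V"
    using sv unfolding is_singular_values_def by blast
  define D :: "real^'n^'n" where "D = (\<chi> i j. if i = j then (\<sigma> $ i)\<^sup>2 else 0)"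
  have VV: "transpose V ** V = mat 1" using oV by (simp add: orthogonal_matrix_def)
  have "transpose (A ** V) ** (A ** V) = transpose V ** (transpose A ** A) ** V"
    by (simp add: matrix_transpose_mul matrix_mul_assoc)
  also have "\<dots> = (transpose V ** V) ** D ** (transpose V ** V)"
    using eq unfolding D_def[symmetric] by (simp add: matrix_mul_assoc)
  also have "\<dots> = D" by (simp add: VV)
  finally have AVD: "transpose (A ** V) ** (A ** V) = D" .
  have E: "(A *v column j V) \<bullet> (A *v column k V) = (if j = k then (\<sigma> $ j)\<^sup>2 else 0)" for j k
    using arg_cong[OF AVD, of "\<lambda>X. X $ j $ k"]
    by (simp add: transpose_matrix_mult_entry column_matrix_mult D_def)
  moreover have "norm (A *v column j V) = \<sigma> $ j" for j
  proof -
    have "(norm (A *v column j V))\<^sup>2 = (\<sigma> $ j)\<^sup>2" using E by (simp add: power2_norm_eq_inner)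
    then show ?thesis using sv unfolding is_singular_values_def by (simp add: power2_eq_iff_nonneg)
  qed
  ultimately show ?thesis using that oV by blast
qed

lemma spectral_norm_singular_values:
  obtains \<sigma> where "is_singular_values (W::real^'n^'m) \<sigma>" "spectral_norm W = Max (range (\<lambda>j. \<sigma> $ j))"
proof -
  obtain \<sigma> where "is_singular_values W \<sigma>" using singular_values_exist by blast
  then have "\<exists>s \<sigma>. is_singular_values W \<sigma> \<and> s = Max (range (\<lambda>j. \<sigma> $ j))" by blast
  then have "\<exists>\<sigma>. is_singular_values W \<sigma> \<and> spectral_norm W = Max (range (\<lambda>j. \<sigma> $ j))"
    unfolding spectral_norm_def by (rule someI_ex)
  with that show ?thesis by blast
qed

lemma nuclear_norm_singular_values:
  obtains \<sigma> where "is_singular_values (A::real^'n^'m) \<sigma>" "nuclear_norm A = (\<Sum>j\<in>UNIV. \<sigma> $ j)"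
proof -
  obtain \<sigma> where "is_singular_values A \<sigma>" using singular_values_exist by blast
  then have "\<exists>s \<sigma>. is_singular_values A \<sigma> \<and> s = (\<Sum>j\<in>UNIV. \<sigma> $ j)" by blast
  then have "\<exists>\<sigma>. is_singular_values A \<sigma> \<and> nuclear_norm A = (\<Sum>j\<in>UNIV. \<sigma> $ j)"
    unfolding nuclear_norm_def by (rule someI_ex)
  with that show ?thesis by blast
qed

section \<open>Operator norm and its duality with the nuclear norm\<close>

definition matrix_onorm :: "real^'n^'m \<Rightarrow> real" where
  "matrix_onorm W = onorm ((*v) W)"

lemma norm_matrix_vector_mult_le: "norm (W *v x) \<le> matrix_onorm W * norm x"
  unfolding matrix_onorm_def by (rule onorm) simp

lemma matrix_onorm_nonneg: "0 \<le> matrix_onorm W"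
  unfolding matrix_onorm_def by (rule onorm_pos_le) simp

lemma matrix_onorm_le: "(\<And>x. norm (W *v x) \<le> b * norm x) \<Longrightarrow> matrix_onorm W \<le> b"
  unfolding matrix_onorm_def by (rule onorm_le)

lemma matrix_onorm_scaleR: "matrix_onorm (c *\<^sub>R W) = \<bar>c\<bar> * matrix_onorm W"
proof -
  have "matrix_onorm (c *\<^sub>R W) = onorm (\<lambda>x. c *\<^sub>R (W *v x))"
    unfolding matrix_onorm_def by (simp add: scaleR_matrix_vector_assoc)
  also have "\<dots> = \<bar>c\<bar> * matrix_onorm W" unfolding matrix_onorm_def by (rule onorm_scaleR) simp
  finally show ?thesis .
qed

lemma spectral_norm_le_matrix_onorm: "spectral_norm W \<le> matrix_onorm W"
proof -
  obtain \<sigma> where sv: "is_singular_values W \<sigma>" and eq: "spectral_norm W = Max (range (\<lambda>j. \<sigma> $ j))"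
    by (rule spectral_norm_singular_values)
  obtain V where oV: "orthogonal_matrix V"
    and "\<And>j k. (W *v column j V) \<bullet> (W *v column k V) = (if j = k then (\<sigma> $ j)\<^sup>2 else 0)"
    and nW: "\<And>j. norm (W *v column j V) = \<sigma> $ j"
    by (rule singular_values_right_basis[OF sv]) blast
  have "\<sigma> $ j \<le> matrix_onorm W" for j
  proof -
    have "norm (column j V) = 1"
      using orthogonal_matrix_column_inner[OF oV, of j j] by (simp add: norm_eq_1)
    then show ?thesis using norm_matrix_vector_mult_le[of W "column j V"] nW by simp
  qed
  then show ?thesis unfolding eq by (subst Max_le_iff) auto
qed

lemma sum_matrix_vector_mult: "(sum F K) *v x = (\<Sum>k\<in>K. F k *v x)"
proof (cases "finite K")
  case True then show ?thesis
    by (induction K rule: finite_induct) (simp_all add: matrix_vector_mult_add_rdistrib)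
next
  case False then show ?thesis by (simp add: matrix_vector_mult_def vec_eq_iff)
qed

lemma outer_mult_vector: "outer a b *v x = (b \<bullet> x) *\<^sub>R a"
  by (simp add: outer_def matrix_vector_mult_def vec_eq_iff inner_vec_def sum_distrib_left
      sum_distrib_right mult_ac)

lemma inner_outer: "X \<bullet> outer a b = a \<bullet> (X *v b)"
  by (simp add: outer_def matrix_vector_mult_def inner_vec_def sum_distrib_left mult_ac)

lemma inner_sum_orthogonal:
  assumes "finite K" "\<And>k l. k \<in> K \<Longrightarrow> l \<in> K \<Longrightarrow> k \<noteq> l \<Longrightarrow> u k \<bullet> u l = 0"
  shows "(\<Sum>k\<in>K. a k *\<^sub>R u k) \<bullet> (\<Sum>k\<in>K. b k *\<^sub>R u k) = (\<Sum>k\<in>K. a k * b k * (u k \<bullet> u k))"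
proof -
  have "(\<Sum>k\<in>K. a k *\<^sub>R u k) \<bullet> (\<Sum>k\<in>K. b k *\<^sub>R u k) = (\<Sum>k\<in>K. \<Sum>l\<in>K. a k * b l * (u k \<bullet> u l))"
    unfolding inner_sum_left by (simp add: inner_sum_right sum_distrib_left mult_ac)
  also have "\<dots> = (\<Sum>k\<in>K. \<Sum>l\<in>K. if k = l then a k * b k * (u k \<bullet> u k) else 0)"
    using assms(2) by (intro sum.cong refl) auto
  also have "\<dots> = (\<Sum>k\<in>K. a k * b k * (u k \<bullet> u k))" using assms(1) by simp
  finally show ?thesis .
qed

lemma bessel_inequality:
  assumes "finite K" "\<And>k l. k \<in> K \<Longrightarrow> l \<in> K \<Longrightarrow> v k \<bullet> v l = (if k = l then 1 else 0)"
  shows "(\<Sum>k\<in>K. (v k \<bullet> x)\<^sup>2) \<le> x \<bullet> x"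
proof -
  define y where "y = (\<Sum>k\<in>K. (v k \<bullet> x) *\<^sub>R v k)"
  have yy: "y \<bullet> y = (\<Sum>k\<in>K. (v k \<bullet> x)\<^sup>2)"
    unfolding y_def using assms by (subst inner_sum_orthogonal) (auto simp: power2_eq_square)
  have xy: "x \<bullet> y = (\<Sum>k\<in>K. (v k \<bullet> x)\<^sup>2)"
    unfolding y_def by (simp add: inner_sum_right power2_eq_square inner_commute)
  have "0 \<le> (x - y) \<bullet> (x - y)" by simp
  also have "\<dots> = x \<bullet> x - 2 * (x \<bullet> y) + y \<bullet> y"
    by (simp add: inner_diff_left inner_diff_right inner_commute)
  finally show ?thesis using yy xy by simp
qed

lemma matrix_onorm_sum_outer_le_1:
  assumes "finite K"
    and a: "\<And>k l. k \<in> K \<Longrightarrow> l \<in> K \<Longrightarrow> k \<noteq> l \<Longrightarrow> a k \<bullet> a l = 0" "\<And>k. k \<in> K \<Longrightarrow> norm (a k) \<le> 1"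
    and b: "\<And>k l. k \<in> K \<Longrightarrow> l \<in> K \<Longrightarrow> b k \<bullet> b l = (if k = l then 1 else 0)"
  shows "matrix_onorm (\<Sum>k\<in>K. outer (a k) (b k)) \<le> 1"
proof (rule matrix_onorm_le)
  fix x
  let ?W = "\<Sum>k\<in>K. outer (a k) (b k)"
  have "?W *v x = (\<Sum>k\<in>K. (b k \<bullet> x) *\<^sub>R a k)"
    by (simp add: sum_matrix_vector_mult outer_mult_vector)
  then have "(?W *v x) \<bullet> (?W *v x) = (\<Sum>k\<in>K. (b k \<bullet> x)\<^sup>2 * (a k \<bullet> a k))"
    using assms(1) a(1) by (simp add: inner_sum_orthogonal power2_eq_square)
  also have "\<dots> \<le> (\<Sum>k\<in>K. (b k \<bullet> x)\<^sup>2)"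
  proof (rule sum_mono)
    fix k assume "k \<in> K"
    have "a k \<bullet> a k = (norm (a k))\<^sup>2" by (simp add: power2_norm_eq_inner)
    also have "\<dots> \<le> 1" using a(2)[OF \<open>k \<in> K\<close>] by (simp add: power_le_one)
    finally show "(b k \<bullet> x)\<^sup>2 * (a k \<bullet> a k) \<le> (b k \<bullet> x)\<^sup>2" by (simp add: mult_left_le)
  qed
  also have "\<dots> \<le> x \<bullet> x" using assms(1) b by (rule bessel_inequality)
  finally have "(norm (?W *v x))\<^sup>2 \<le> (norm x)\<^sup>2" by (simp only: power2_norm_eq_inner)
  then show "norm (?W *v x) \<le> 1 * norm x" using power2_le_imp_le by simp
qed

lemma inner_eq_sum_orthogonal_columns:
  fixes A W :: "real^'n^'m"
  assumes oV: "orthogonal_matrix V"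
  shows "A \<bullet> W = (\<Sum>j\<in>UNIV. (A *v column j V) \<bullet> (W *v column j V))"
proof -
  have VV: "V ** transpose V = mat 1" using oV by (simp add: orthogonal_matrix_def)
  have "A \<bullet> W = trace (transpose A ** W)" by (simp add: frob_inner_eq_inner[symmetric] frob_inner_def)
  also have "\<dots> = trace (((transpose A ** W) ** V) ** transpose V)"
    by (simp add: matrix_mul_assoc[symmetric] VV)
  also have "\<dots> = trace (transpose V ** ((transpose A ** W) ** V))" by (rule trace_mul_sym)
  also have "transpose V ** ((transpose A ** W) ** V) = transpose (A ** V) ** (W ** V)"
    by (simp add: matrix_transpose_mul matrix_mul_assoc)
  also have "trace \<dots> = (\<Sum>j\<in>UNIV. (A *v column j V) \<bullet> (W *v column j V))"
    by (simp add: trace_def transpose_matrix_mult_entry column_matrix_mult)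
  finally show ?thesis .
qed

lemma nuclear_norm_nonneg: "0 \<le> nuclear_norm A"
proof -
  obtain \<sigma> where "is_singular_values A \<sigma>" "nuclear_norm A = (\<Sum>j\<in>UNIV. \<sigma> $ j)"
    by (rule nuclear_norm_singular_values)
  then show ?thesis unfolding is_singular_values_def by (simp add: sum_nonneg)
qed

lemma inner_le_nuclear_norm_mult_matrix_onorm:
  fixes A W :: "real^'n^'m"
  shows "A \<bullet> W \<le> nuclear_norm A * matrix_onorm W"
proof -
  obtain \<sigma> where sv: "is_singular_values A \<sigma>" and eq: "nuclear_norm A = (\<Sum>j\<in>UNIV. \<sigma> $ j)"
    by (rule nuclear_norm_singular_values)
  obtain V where oV: "orthogonal_matrix V"
    and "\<And>j k. (A *v column j V) \<bullet> (A *v column k V) = (if j = k then (\<sigma> $ j)\<^sup>2 else 0)"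
    and nA: "\<And>j. norm (A *v column j V) = \<sigma> $ j"
    by (rule singular_values_right_basis[OF sv]) blast
  have "A \<bullet> W = (\<Sum>j\<in>UNIV. (A *v column j V) \<bullet> (W *v column j V))"
    by (rule inner_eq_sum_orthogonal_columns[OF oV])
  also have "\<dots> \<le> (\<Sum>j\<in>UNIV. \<sigma> $ j * matrix_onorm W)"
  proof (rule sum_mono)
    fix j
    have "norm (column j V) = 1"
      using orthogonal_matrix_column_inner[OF oV, of j j] by (simp add: norm_eq_1)
    then have "norm (W *v column j V) \<le> matrix_onorm W"
      using norm_matrix_vector_mult_le[of W "column j V"] by simp
    then have "norm (A *v column j V) * norm (W *v column j V) \<le> \<sigma> $ j * matrix_onorm W"
      by (metis nA mult_left_mono norm_ge_zero)
    with norm_cauchy_schwarz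
    show "(A *v column j V) \<bullet> (W *v column j V) \<le> \<sigma> $ j * matrix_onorm W"
      by (rule order_trans)
  qed
  also have "\<dots> = nuclear_norm A * matrix_onorm W" by (simp add: eq sum_distrib_right)
  finally show ?thesis .
qed

text \<open>The dual certificate is \<open>W = \<Sum>\<^sub>j \<sigma>\<^sub>j\<^sup>-\<^sup>1 (A v\<^sub>j) v\<^sub>j\<^sup>T\<close>; for \<open>\<sigma>\<^sub>j = 0\<close> the convention
  \<open>inverse 0 = 0\<close> simply drops the term.\<close>
lemma nuclear_norm_attained:
  fixes A :: "real^'n^'m"
  obtains W where "matrix_onorm W \<le> 1" "A \<bullet> W = nuclear_norm A"
proof -
  obtain \<sigma> where sv: "is_singular_values A \<sigma>" and eq: "nuclear_norm A = (\<Sum>j\<in>UNIV. \<sigma> $ j)"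
    by (rule nuclear_norm_singular_values)
  obtain V where oV: "orthogonal_matrix V"
    and E: "\<And>j k. (A *v column j V) \<bullet> (A *v column k V) = (if j = k then (\<sigma> $ j)\<^sup>2 else 0)"
    and nA: "\<And>j. norm (A *v column j V) = \<sigma> $ j"
    by (rule singular_values_right_basis[OF sv]) blast
  define a where "a j = inverse (\<sigma> $ j) *\<^sub>R (A *v column j V)" for j
  define W where "W = (\<Sum>j\<in>UNIV. outer (a j) (column j V))"
  have "matrix_onorm W \<le> 1" unfolding W_def
  proof (rule matrix_onorm_sum_outer_le_1)
    show "a j \<bullet> a k = 0" if "j \<noteq> k" for j k using that by (simp add: a_def E)
    show "norm (a j) \<le> 1" for j
      using nA[of j] norm_ge_zero[of "A *v column j V"]
      by (cases "\<sigma> $ j = 0") (simp_all add: a_def)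
    show "column j V \<bullet> column k V = (if j = k then 1 else 0)" for j k
      by (rule orthogonal_matrix_column_inner[OF oV])
  qed simp
  moreover have "A \<bullet> W = nuclear_norm A"
  proof -
    have "A \<bullet> W = (\<Sum>j\<in>UNIV. inverse (\<sigma> $ j) * (\<sigma> $ j)\<^sup>2)"
      unfolding W_def by (simp add: inner_sum_right inner_outer a_def E inner_commute)
    also have "\<dots> = (\<Sum>j\<in>UNIV. \<sigma> $ j)"
      by (intro sum.cong refl) (simp add: power2_eq_square field_simps)
    finally show ?thesis using eq by simp
  qed
  ultimately show ?thesis by (rule that)
qed

lemma nuclear_norm_triangle: "nuclear_norm (A + B) \<le> nuclear_norm A + nuclear_norm B"
proof -
  obtain W where W: "matrix_onorm W \<le> 1" "(A + B) \<bullet> W = nuclear_norm (A + B)"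
    by (rule nuclear_norm_attained)
  have "nuclear_norm (A + B) = A \<bullet> W + B \<bullet> W" using W(2) by (simp add: inner_add_left)
  also have "\<dots> \<le> (nuclear_norm A + nuclear_norm B) * matrix_onorm W"
    using inner_le_nuclear_norm_mult_matrix_onorm[of A W] inner_le_nuclear_norm_mult_matrix_onorm[of B W]
    by (simp add: distrib_right)
  also have "\<dots> \<le> nuclear_norm A + nuclear_norm B"
    using W(1) nuclear_norm_nonneg[of A] nuclear_norm_nonneg[of B] by (simp add: mult_left_le)
  finally show ?thesis .
qed

section \<open>Matrices given by an SVD\<close>

lemma matrix_onorm_sum_outer_orthonormal_le_1:
  fixes r :: nat
  assumes u: "\<And>k l. k < r \<Longrightarrow> l < r \<Longrightarrow> u k \<bullet> u l = (if k = l then 1 else 0)"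
    and v: "\<And>k l. k < r \<Longrightarrow> l < r \<Longrightarrow> v k \<bullet> v l = (if k = l then 1 else 0)"
  shows "matrix_onorm (\<Sum>k<r. outer (u k) (v k)) \<le> 1"
  by (rule matrix_onorm_sum_outer_le_1) (auto simp: u v norm_eq_sqrt_inner)

lemma inner_sum_outer_orthonormal:
  fixes r :: nat
  assumes u: "\<And>k l. k < r \<Longrightarrow> l < r \<Longrightarrow> u k \<bullet> u l = (if k = l then 1 else 0)"
    and v: "\<And>k l. k < r \<Longrightarrow> l < r \<Longrightarrow> v k \<bullet> v l = (if k = l then 1 else 0)"
  shows "(\<Sum>k<r. \<sigma> k *\<^sub>R outer (u k) (v k)) \<bullet> (\<Sum>k<r. outer (u k) (v k)) = (\<Sum>k<r. \<sigma> k)"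
proof -
  have "(\<Sum>k<r. \<sigma> k *\<^sub>R outer (u k) (v k)) *v v l = \<sigma> l *\<^sub>R u l" if l: "l < r" for l
  proof -
    have "(\<Sum>k<r. \<sigma> k *\<^sub>R outer (u k) (v k)) *v v l = (\<Sum>k<r. (\<sigma> k * (v k \<bullet> v l)) *\<^sub>R u k)"
      by (simp add: sum_matrix_vector_mult scaleR_matrix_vector_assoc[symmetric] outer_mult_vector)
    also have "\<dots> = (\<Sum>k<r. if k = l then \<sigma> l *\<^sub>R u l else 0)"
      by (intro sum.cong refl) (simp add: v l)
    also have "\<dots> = \<sigma> l *\<^sub>R u l" using l by simp
    finally show ?thesis .
  qed
  then show ?thesis by (simp add: inner_sum_right inner_outer u)
qed

lemma nuclear_norm_sum_outer_orthonormal: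
  fixes r :: nat
  assumes u: "\<And>k l. k < r \<Longrightarrow> l < r \<Longrightarrow> u k \<bullet> u l = (if k = l then 1 else 0)"
    and v: "\<And>k l. k < r \<Longrightarrow> l < r \<Longrightarrow> v k \<bullet> v l = (if k = l then 1 else 0)"
    and \<sigma>: "\<And>k. k < r \<Longrightarrow> 0 \<le> \<sigma> k"
  shows "nuclear_norm (\<Sum>k<r. \<sigma> k *\<^sub>R outer (u k) (v k)) = (\<Sum>k<r. \<sigma> k)"
proof (rule antisym)
  define B where "B = (\<Sum>k<r. \<sigma> k *\<^sub>R outer (u k) (v k))"
  obtain W where W: "matrix_onorm W \<le> 1" "B \<bullet> W = nuclear_norm B"
    by (rule nuclear_norm_attained)
  have "u k \<bullet> (W *v v k) \<le> 1" if k: "k < r" for k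
  proof -
    have "norm (u k) = 1" "norm (v k) = 1" using u[OF k k] v[OF k k] by (simp_all add: norm_eq_1)
    moreover have "u k \<bullet> (W *v v k) \<le> norm (u k) * norm (W *v v k)" by (rule norm_cauchy_schwarz)
    ultimately have "u k \<bullet> (W *v v k) \<le> matrix_onorm W"
      using norm_matrix_vector_mult_le[of W "v k"] by simp
    then show ?thesis using W(1) by simp
  qed
  then have "(\<Sum>k<r. \<sigma> k * (u k \<bullet> (W *v v k))) \<le> (\<Sum>k<r. \<sigma> k)"
    using \<sigma> by (intro sum_mono) (simp add: mult_left_le)
  moreover have "B \<bullet> W = (\<Sum>k<r. \<sigma> k * (u k \<bullet> (W *v v k)))"
    unfolding B_def by (simp add: inner_sum_left inner_commute[of "outer _ _"] inner_outer)
  ultimately show "nuclear_norm B \<le> (\<Sum>k<r. \<sigma> k)" using W(2) by simp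
  have "(\<Sum>k<r. \<sigma> k) = B \<bullet> (\<Sum>k<r. outer (u k) (v k))"
    unfolding B_def by (rule inner_sum_outer_orthonormal[OF u v, symmetric])
  also have "\<dots> \<le> nuclear_norm B * 1"
    using inner_le_nuclear_norm_mult_matrix_onorm matrix_onorm_sum_outer_orthonormal_le_1[OF u v]
      nuclear_norm_nonneg by (rule order_trans[OF _ mult_left_mono])
  finally show "(\<Sum>k<r. \<sigma> k) \<le> nuclear_norm B" by simp
qed

lemma spectral_descent_step:
  fixes r :: nat
  assumes u: "\<And>k l. k < r \<Longrightarrow> l < r \<Longrightarrow> u k \<bullet> u l = (if k = l then 1 else 0)"
    and v: "\<And>k l. k < r \<Longrightarrow> l < r \<Longrightarrow> v k \<bullet> v l = (if k = l then 1 else 0)"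
    and \<sigma>: "\<And>k. k < r \<Longrightarrow> 0 \<le> \<sigma> k" and \<eta>: "0 \<le> \<eta>"
    and B: "B = (\<Sum>k<r. \<sigma> k *\<^sub>R outer (u k) (v k))"
    and \<Delta>: "\<Delta> = - (\<eta> * nuclear_norm B) *\<^sub>R (\<Sum>k<r. outer (u k) (v k))"
  shows "B \<bullet> \<Delta> = - \<eta> * (nuclear_norm B)\<^sup>2" and "matrix_onorm \<Delta> \<le> \<eta> * nuclear_norm B"
proof -
  define U where "U = (\<Sum>k<r. outer (u k) (v k))"
  define b where "b = nuclear_norm B"
  have b0: "0 \<le> b" unfolding b_def by (rule nuclear_norm_nonneg)
  have "B \<bullet> U = b"
    using inner_sum_outer_orthonormal[OF u v, where \<sigma> = \<sigma>]
      nuclear_norm_sum_outer_orthonormal[OF u v \<sigma>]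
    unfolding B U_def b_def by simp
  then show "B \<bullet> \<Delta> = - \<eta> * (nuclear_norm B)\<^sup>2"
    unfolding \<Delta> U_def[symmetric] b_def[symmetric] by (simp add: power2_eq_square)
  have "\<Delta> = (- (\<eta> * b)) *\<^sub>R U" unfolding \<Delta> U_def b_def by simp
  then have "matrix_onorm \<Delta> = \<bar>- (\<eta> * b)\<bar> * matrix_onorm U" by (simp only: matrix_onorm_scaleR)
  also have "\<dots> = \<eta> * b * matrix_onorm U" using \<eta> b0 by simp
  also have "\<dots> \<le> \<eta> * b"
    using matrix_onorm_sum_outer_orthonormal_le_1[of r u v] u v \<eta> b0
    unfolding U_def by (simp add: mult_left_le)
  finally show "matrix_onorm \<Delta> \<le> \<eta> * nuclear_norm B" unfolding b_def .
qed

section \<open>The descent lemma\<close>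

lemma has_derivative_grad:
  assumes "f differentiable (at Y)"
  shows "(f has_derivative (\<lambda>H. grad f Y \<bullet> H)) (at Y)"
proof -
  obtain D where D: "(f has_derivative D) (at Y)" using assms differentiable_def by blast
  have lin: "linear D" using has_derivative_bounded_linear[OF D] by (rule bounded_linear.linear)
  define G where "G = (\<Sum>b\<in>Basis. D b *\<^sub>R b)"
  have "D H = G \<bullet> H" for H
  proof -
    have "D H = (\<Sum>i\<in>Basis. H \<bullet> i * (D i \<bullet> 1))"
      using Linear_Algebra.linear_componentwise[OF lin, of H 1] by simp
    also have "\<dots> = G \<bullet> H" by (simp add: G_def inner_sum_right inner_commute mult.commute)
    finally show ?thesis .
  qed
  then have "frob_inner G = D" by (simp add: fun_eq_iff frob_inner_eq_inner)
  with D have "(f has_derivative frob_inner G) (at Y)" by simp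
  then have "(f has_derivative frob_inner (grad f Y)) (at Y)"
    unfolding grad_def by (rule someI)
  then show ?thesis by (simp add: frob_inner_eq_inner[abs_def])
qed

lemma descent_lemma:
  fixes f :: "real^'n^'m \<Rightarrow> real"
  assumes diff: "\<And>Y. f differentiable (at Y)"
    and lip: "\<And>Y Z. nuclear_norm (grad f Y - grad f Z) \<le> L * spectral_norm (Y - Z)"
    and Lpos: "L > 0"
  shows "f (X + D) \<le> f X + grad f X \<bullet> D + L / 2 * (matrix_onorm D)\<^sup>2"
proof -
  define n where "n = matrix_onorm D"
  define c where "c = grad f X \<bullet> D"
  define \<psi> where "\<psi> t = f (X + t *\<^sub>R D) - t * c - L / 2 * t\<^sup>2 * n\<^sup>2" for t
  define \<psi>' where "\<psi>' t = grad f (X + t *\<^sub>R D) \<bullet> D - c - L * t * n\<^sup>2" for t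
  have "(\<psi> has_real_derivative \<psi>' t) (at t)" for t
  proof -
    have "((\<lambda>t. X + t *\<^sub>R D) has_derivative (\<lambda>h. h *\<^sub>R D)) (at t)"
      by (auto intro!: derivative_eq_intros)
    from has_derivative_compose[OF this has_derivative_grad[OF diff]]
    have "((\<lambda>t. f (X + t *\<^sub>R D)) has_derivative (\<lambda>h. grad f (X + t *\<^sub>R D) \<bullet> (h *\<^sub>R D))) (at t)" .
    moreover have "(\<lambda>h. grad f (X + t *\<^sub>R D) \<bullet> (h *\<^sub>R D)) = (*) (grad f (X + t *\<^sub>R D) \<bullet> D)"
      by (simp add: fun_eq_iff mult.commute)
    ultimately have d: "((\<lambda>t. f (X + t *\<^sub>R D)) has_real_derivative (grad f (X + t *\<^sub>R D) \<bullet> D)) (at t)"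
      by (simp add: has_field_derivative_def)
    have "((\<lambda>t. f (X + t *\<^sub>R D) - t * c - L / 2 * t\<^sup>2 * n\<^sup>2) has_real_derivative
        (grad f (X + t *\<^sub>R D) \<bullet> D - 1 * c - L / 2 * (2 * t) * n\<^sup>2)) (at t)"
      by (rule derivative_eq_intros d | simp)+
    then show ?thesis unfolding \<psi>_def[abs_def] \<psi>'_def by simp
  qed
  then obtain z where z: "0 < z" "z < 1" and mvt: "\<psi> 1 - \<psi> 0 = (1 - 0) * \<psi>' z"
    using MVT2[of 0 1 \<psi> \<psi>'] by auto
  have n0: "0 \<le> n" unfolding n_def by (rule matrix_onorm_nonneg)
  have "grad f (X + z *\<^sub>R D) \<bullet> D - c = (grad f (X + z *\<^sub>R D) - grad f X) \<bullet> D"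
    by (simp add: c_def inner_diff_left)
  also have "\<dots> \<le> nuclear_norm (grad f (X + z *\<^sub>R D) - grad f X) * n"
    unfolding n_def by (rule inner_le_nuclear_norm_mult_matrix_onorm)
  also have "\<dots> \<le> L * spectral_norm (z *\<^sub>R D) * n"
    using lip[of "X + z *\<^sub>R D" X] n0 by (simp add: mult_right_mono)
  also have "\<dots> \<le> L * (z * n) * n"
  proof -
    have "spectral_norm (z *\<^sub>R D) \<le> z * n"
      using spectral_norm_le_matrix_onorm[of "z *\<^sub>R D"] z by (simp add: matrix_onorm_scaleR n_def)
    then show ?thesis using Lpos n0 by (simp add: mult_right_mono)
  qed
  finally have "\<psi>' z \<le> 0" unfolding \<psi>'_def by (simp add: algebra_simps power2_eq_square)
  then have "\<psi> 1 \<le> \<psi> 0" using mvt by simp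
  then show ?thesis unfolding \<psi>_def c_def n_def by simp
qed

lemma step_decrease_arith:
  fixes \<eta> L b e g d :: real
  assumes "\<eta> > 0" "\<eta> * L \<le> 1" "0 \<le> b" "0 \<le> e" "0 \<le> g" "g \<le> b + e"
    and "d \<ge> \<eta> * b\<^sup>2 - \<eta> * b * e - L / 2 * (\<eta> * b)\<^sup>2"
  shows "(\<eta> / 2 - \<eta>\<^sup>2 * L / 2) * g\<^sup>2 \<le> 2 * d + (2 * \<eta> - \<eta>\<^sup>2 * L) * e\<^sup>2"
proof -
  have c0: "0 \<le> \<eta> / 2 - \<eta>\<^sup>2 * L / 2" using assms(1,2) by (simp add: power2_eq_square algebra_simps)
  have "(\<eta> / 2 - \<eta>\<^sup>2 * L / 2) * g\<^sup>2 \<le> (\<eta> / 2 - \<eta>\<^sup>2 * L / 2) * (b + e)\<^sup>2"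
    using assms(5,6) c0 by (simp add: mult_left_mono power_mono)
  also have "\<dots> = 2 * (\<eta> * b\<^sup>2 - \<eta> * b * e - L / 2 * (\<eta> * b)\<^sup>2) + (2 * \<eta> - \<eta>\<^sup>2 * L) * e\<^sup>2
      - \<eta> * ((3 - \<eta> * L) / 2) * (b - e)\<^sup>2"
    by (simp add: power2_eq_square field_simps)
  also have "\<dots> \<le> 2 * (\<eta> * b\<^sup>2 - \<eta> * b * e - L / 2 * (\<eta> * b)\<^sup>2) + (2 * \<eta> - \<eta>\<^sup>2 * L) * e\<^sup>2"
  proof -
    have "0 \<le> \<eta> * ((3 - \<eta> * L) / 2) * (b - e)\<^sup>2" using assms(1,2) by simp
    then show ?thesis by linarith
  qed
  also have "\<dots> \<le> 2 * d + (2 * \<eta> - \<eta>\<^sup>2 * L) * e\<^sup>2"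
    using assms(7) by simp
  finally show ?thesis .
qed

theorem mainTheorem4:
  fixes f :: "real^'n^'m \<Rightarrow> real"
    and L \<eta> :: real
    and X B \<Delta> X' :: "real^'n^'m"
    and r :: nat and \<sigma> :: "nat \<Rightarrow> real"
    and u :: "nat \<Rightarrow> real^'m" and v :: "nat \<Rightarrow> real^'n"
  assumes mn: "CARD('n) \<le> CARD('m)"
    and diff: "\<And>Y. f differentiable (at Y)"
    and lip: "\<And>Y Z. nuclear_norm (grad f Y - grad f Z) \<le> L * spectral_norm (Y - Z)"
    and Lpos: "L > 0"
    and etapos: "\<eta> > 0"
    and etaL: "\<eta> * L \<le> 1"
    and u_orth: "\<And>k l. k < r \<Longrightarrow> l < r \<Longrightarrow> u k \<bullet> u l = (if k = l then 1 else 0)"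
    and v_orth: "\<And>k l. k < r \<Longrightarrow> l < r \<Longrightarrow> v k \<bullet> v l = (if k = l then 1 else 0)"
    and \<sigma>_pos: "\<And>k. k < r \<Longrightarrow> \<sigma> k > 0"
    and svd: "B = (\<Sum>k<r. \<sigma> k *\<^sub>R outer (u k) (v k))"
    and step: "\<Delta> = - (\<eta> * nuclear_norm B) *\<^sub>R (\<Sum>k<r. outer (u k) (v k))"
    and next_iter: "X' = X + \<Delta>"
  shows "(\<eta> / 2 - \<eta>\<^sup>2 * L / 2) * (nuclear_norm (grad f X))\<^sup>2
           \<le> 2 * (f X - f X') + (2 * \<eta> - \<eta>\<^sup>2 * L) * (nuclear_norm (grad f X - B))\<^sup>2"
proof -
  define G where "G = grad f X"
  define b where "b = nuclear_norm B"
  define e where "e = nuclear_norm (G - B)"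
  have b0: "0 \<le> b" and e0: "0 \<le> e" unfolding b_def e_def by (rule nuclear_norm_nonneg)+
  have "\<And>k. k < r \<Longrightarrow> 0 \<le> \<sigma> k" using \<sigma>_pos by (simp add: less_imp_le)
  note step_props = spectral_descent_step[OF u_orth v_orth this less_imp_le[OF etapos] svd step]
  have onorm_\<Delta>: "matrix_onorm \<Delta> \<le> \<eta> * b" using step_props(2) unfolding b_def .
  have "G \<bullet> \<Delta> = B \<bullet> \<Delta> + (G - B) \<bullet> \<Delta>" by (simp add: inner_diff_left)
  also have "\<dots> \<le> - \<eta> * b\<^sup>2 + e * (\<eta> * b)"
    using step_props(1) inner_le_nuclear_norm_mult_matrix_onorm[of "G - B" \<Delta>]
      mult_left_mono[OF onorm_\<Delta> e0]
    unfolding b_def e_def by simp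
  finally have G\<Delta>: "G \<bullet> \<Delta> \<le> - \<eta> * b\<^sup>2 + e * (\<eta> * b)" .
  have "L / 2 * (matrix_onorm \<Delta>)\<^sup>2 \<le> L / 2 * (\<eta> * b)\<^sup>2"
    using power_mono[OF onorm_\<Delta> matrix_onorm_nonneg] Lpos by simp
  with G\<Delta> descent_lemma[OF diff lip Lpos, of X \<Delta>]
  have "f X - f X' \<ge> \<eta> * b\<^sup>2 - \<eta> * b * e - L / 2 * (\<eta> * b)\<^sup>2"
    unfolding next_iter G_def by (simp add: algebra_simps)
  moreover have "nuclear_norm G \<le> b + e"
    using nuclear_norm_triangle[of B "G - B"] unfolding b_def e_def by simp
  ultimately show ?thesis
    using step_decrease_arith[OF etapos etaL b0 e0 nuclear_norm_nonneg] unfolding G_def e_def by blast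
qed

end
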